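(* Let $B\subseteq\widetilde\Sigma^*\setminus\mathring\Sigma^+$ be a base in decomposed form with scaffold $sc$ and fill $fl$. Then $\mathcal{C}(B)=\big(sc\cup(sc\,@\,fl^@)\big)\cap\Sigma^*$.
   Context: $\Sigma$ is a finite alphabet, $\mathring\Sigma=\{\mathring a\mid a\in\Sigma\}$ a disjoint ("dotted") copy, and $\widetilde\Sigma=\Sigma\cup\mathring\Sigma$. The match operation $@$ on letters is: $a@\mathring a=\mathring a@a=a$, $\mathring a@\mathring a=\mathring a$ for $a\in\Sigma$, undefined otherwise. For words $w,w'\in\widetilde\Sigma^n$, $w@w'=(w(1)@w'(1))\cdots(w(n)@w'(n))$ if every letterwise match is defined ($\epsilon@\epsilon=\epsilon$); otherwise (including unequal lengths) undefined. For languages, $B'@B''=\{w'@w''\mid w'\in B',w''\in B'', w'@w''\text{ defined}\}$. Define $B^{0@}=B$, $B^{i@}=B^{(i-1)@}@B$ for $i>0$, and $B^@=\bigcup_{i\ge0}B^{i@}$. The consensual language with base $B$ is $\mathcal{C}(B)=B^@\cap\Sigma^*$. A language $B$ is unproductive if $\mathcal{C}(B)=\emptyset$; a pair $(B,B')$ is unmatchable if $B@B'=\emptyset$. A base $B\subseteq\widetilde\Sigma^*\setminus\mathring\Sigma^+$ is in decomposed form with scaffold $sc$ and fill $fl$ if $B$ is the disjoint union of $sc$ and $fl$, $fl$ is unproductive, and the pair $(sc,sc)$ is unmatchable. *)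

theory Defs
  imports Main
begin

datatype 'a xletter = Plain 'a | Dotted 'a

fun lmatch :: "'a xletter \<Rightarrow> 'a xletter \<Rightarrow> 'a xletter option" where
  "lmatch (Plain a) (Dotted b) = (if a = b then Some (Plain a) else None)"
| "lmatch (Dotted a) (Plain b) = (if a = b then Some (Plain a) else None)"
| "lmatch (Dotted a) (Dotted b) = (if a = b then Some (Dotted a) else None)"
| "lmatch (Plain a) (Plain b) = None"

fun wmatch :: "'a xletter list \<Rightarrow> 'a xletter list \<Rightarrow> 'a xletter list option" where
  "wmatch [] [] = Some []"
| "wmatch (x # xs) (y # ys) =
     (case lmatch x y of
        None \<Rightarrow> None
      | Some z \<Rightarrow> (case wmatch xs ys of None \<Rightarrow> None | Some zs \<Rightarrow> Some (z # zs)))"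
| "wmatch _ _ = None"

definition lang_match :: "'a xletter list set \<Rightarrow> 'a xletter list set \<Rightarrow> 'a xletter list set" where
  "lang_match B1 B2 = {w. \<exists>w1\<in>B1. \<exists>w2\<in>B2. wmatch w1 w2 = Some w}"

fun match_pow :: "'a xletter list set \<Rightarrow> nat \<Rightarrow> 'a xletter list set" where
  "match_pow B 0 = B"
| "match_pow B (Suc i) = lang_match (match_pow B i) B"

definition match_star :: "'a xletter list set \<Rightarrow> 'a xletter list set" where
  "match_star B = (\<Union>i. match_pow B i)"

text \<open>Sigma^* embedded: words consisting of plain letters only.\<close>
definition plain_words :: "'a xletter list set" where
  "plain_words = {w. \<forall>x\<in>set w. \<exists>a. x = Plain a}"

text \<open>Dotted Sigma^+: nonempty words of dotted letters only.\<close>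
definition dotted_plus :: "'a xletter list set" where
  "dotted_plus = {w. w \<noteq> [] \<and> (\<forall>x\<in>set w. \<exists>a. x = Dotted a)}"

definition consensual :: "'a xletter list set \<Rightarrow> 'a xletter list set" where
  "consensual B = match_star B \<inter> plain_words"

definition unproductive :: "'a xletter list set \<Rightarrow> bool" where
  "unproductive B \<longleftrightarrow> consensual B = {}"

definition unmatchable :: "'a xletter list set \<Rightarrow> 'a xletter list set \<Rightarrow> bool" where
  "unmatchable B1 B2 \<longleftrightarrow> lang_match B1 B2 = {}"

definition decomposed_form ::
  "'a xletter list set \<Rightarrow> 'a xletter list set \<Rightarrow> 'a xletter list set \<Rightarrow> bool" where
  "decomposed_form B sc fl \<longleftrightarrow>
     B \<inter> dotted_plus = {} \<and> B = sc \<union> fl \<and> sc \<inter> fl = {} \<and>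
     unproductive fl \<and> unmatchable sc sc"

end

theory Submission
  imports Defs
begin

text \<open>Word matching is commutative and associative, so \<open>lang_match\<close> is a commutative
  semigroup product on languages, and \<open>match_star B\<close> is the least language containing \<open>B\<close>
  and closed under matching with \<open>B\<close>. The language \<open>sc \<union> F \<union> sc @ F\<close>, where \<open>F\<close> is
  the star of the fill, is closed in this sense: matching with a scaffold word leads into
  \<open>sc @ sc @ F = {}\<close> or \<open>sc @ F\<close>, matching with a fill word stays in \<open>F\<close> or \<open>sc @ F\<close>.
  Plain words avoid \<open>F\<close> because the fill is unproductive. Conversely, reassociating shows
  that \<open>sc\<close> matched with the \<open>j\<close>-th power of the fill lies in the \<open>(j+1)\<close>-th power of \<open>B\<close>.\<close>

lemma lmatch_commute: "lmatch x y = lmatch y x"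
  by (cases x; cases y) auto

lemma wmatch_commute: "wmatch xs ys = wmatch ys xs"
proof (induction xs arbitrary: ys)
  case Nil
  then show ?case by (cases ys) auto
next
  case (Cons x xs)
  then show ?case
    by (cases ys) (auto simp: lmatch_commute split: option.split)
qed

lemma lmatch_assoc:
  "lmatch x y = Some z \<Longrightarrow> lmatch z w = Some u \<Longrightarrow> \<exists>v. lmatch y w = Some v \<and> lmatch x v = Some u"
  by (cases x; cases y; cases w) (auto split: if_splits)

lemma wmatch_assoc:
  "wmatch a b = Some c \<Longrightarrow> wmatch c d = Some e \<Longrightarrow> \<exists>v. wmatch b d = Some v \<and> wmatch a v = Some e"
proof (induction a arbitrary: b c d e)
  case Nil
  then show ?case by (cases b; cases d) auto
next
  case (Cons x xs)
  obtain y ys z zs where b: "b = y # ys" and z: "lmatch x y = Some z"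
    and zs: "wmatch xs ys = Some zs" and c: "c = z # zs"
    using Cons.prems(1) by (cases b) (auto split: option.splits)
  obtain w ws u us where d: "d = w # ws" and u: "lmatch z w = Some u"
    and us: "wmatch zs ws = Some us" and e: "e = u # us"
    using Cons.prems(2) c by (cases d) (auto split: option.splits)
  obtain v where "lmatch y w = Some v" "lmatch x v = Some u"
    using lmatch_assoc[OF z u] by blast
  moreover obtain vs where "wmatch ys ws = Some vs" "wmatch xs vs = Some us"
    using Cons.IH[OF zs us] by blast
  ultimately show ?case
    using b d e by (intro exI[of _ "v # vs"]) auto
qed

lemma lang_match_commute: "lang_match A B = lang_match B A"
  unfolding lang_match_def by (auto intro: wmatch_commute[THEN trans])

lemma lang_match_assoc_subset:
  "lang_match (lang_match A B) C \<subseteq> lang_match A (lang_match B C)"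
  unfolding lang_match_def by (blast dest: wmatch_assoc)

lemma lang_match_assoc: "lang_match (lang_match A B) C = lang_match A (lang_match B C)"
proof
  have "lang_match A (lang_match B C) = lang_match (lang_match C B) A"
    by (simp add: lang_match_commute)
  also have "\<dots> \<subseteq> lang_match C (lang_match B A)"
    by (rule lang_match_assoc_subset)
  also have "\<dots> = lang_match (lang_match A B) C"
    by (simp add: lang_match_commute)
  finally show "lang_match A (lang_match B C) \<subseteq> lang_match (lang_match A B) C" .
qed (rule lang_match_assoc_subset)

lemma lang_match_mono: "A \<subseteq> A' \<Longrightarrow> B \<subseteq> B' \<Longrightarrow> lang_match A B \<subseteq> lang_match A' B'"
  unfolding lang_match_def by blast

lemma lang_match_Un_right: "lang_match A (B \<union> C) = lang_match A B \<union> lang_match A C"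
  unfolding lang_match_def by blast

lemma lang_match_Un_left: "lang_match (A \<union> B) C = lang_match A C \<union> lang_match B C"
  unfolding lang_match_def by blast

lemma lang_match_empty_left [simp]: "lang_match {} A = {}"
  unfolding lang_match_def by blast

lemma lang_match_UN_right: "lang_match A (\<Union>i. F i) = (\<Union>i. lang_match A (F i))"
  unfolding lang_match_def by blast

lemma subset_match_star: "B \<subseteq> match_star B"
  unfolding match_star_def using match_pow.simps(1)[of B] by blast

lemma match_pow_subset_match_star: "match_pow B i \<subseteq> match_star B"
  unfolding match_star_def by blast

lemma lang_match_match_star_subset: "lang_match (match_star B) B \<subseteq> match_star B"
proof -
  have "lang_match (match_star B) B = (\<Union>i. match_pow B (Suc i))"
    unfolding match_star_def lang_match_def match_pow.simps(2) by blast
  then show ?thesis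
    using match_pow_subset_match_star by blast
qed

lemma match_star_least:
  assumes "B \<subseteq> S" and "lang_match S B \<subseteq> S"
  shows "match_star B \<subseteq> S"
proof -
  have "match_pow B i \<subseteq> S" for i
  proof (induction i)
    case (Suc i)
    have "match_pow B (Suc i) \<subseteq> lang_match S B"
      using lang_match_mono[OF Suc.IH order_refl] by simp
    with assms(2) show ?case by (rule order_trans[rotated])
  qed (simp add: assms(1))
  then show ?thesis unfolding match_star_def by blast
qed

lemma scaffold_fill_closed:
  assumes "B = sc \<union> fl" and "unmatchable sc sc"
  defines "S \<equiv> sc \<union> match_star fl \<union> lang_match sc (match_star fl)"
  shows "lang_match S B \<subseteq> S"
proof -
  let ?F = "match_star fl"
  have sc_sc: "lang_match sc sc = {}"
    using assms(2) unfolding unmatchable_def .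
  have F_fl: "lang_match ?F fl \<subseteq> ?F"
    by (rule lang_match_match_star_subset)
  have "lang_match sc fl \<subseteq> lang_match sc ?F"
    by (rule lang_match_mono[OF order_refl subset_match_star])
  moreover have "lang_match ?F sc = lang_match sc ?F"
    by (rule lang_match_commute)
  moreover have "lang_match (lang_match sc ?F) sc = {}"
  proof -
    have "lang_match (lang_match sc ?F) sc = lang_match (lang_match ?F sc) sc"
      by (simp only: lang_match_commute[of sc ?F])
    also have "\<dots> = lang_match ?F (lang_match sc sc)"
      by (rule lang_match_assoc)
    finally show ?thesis
      by (simp add: sc_sc lang_match_commute[of ?F "{}"])
  qed
  moreover have "lang_match (lang_match sc ?F) fl \<subseteq> lang_match sc ?F"
    unfolding lang_match_assoc by (rule lang_match_mono[OF order_refl F_fl])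
  ultimately show ?thesis
    using F_fl sc_sc unfolding S_def assms(1) lang_match_Un_left lang_match_Un_right by blast
qed

lemma scaffold_match_pow_subset:
  assumes "B = sc \<union> fl"
  shows "lang_match sc (match_pow fl j) \<subseteq> match_pow B (Suc j)"
proof (induction j)
  case 0
  have "sc \<subseteq> B" "fl \<subseteq> B"
    using assms by auto
  then show ?case
    by (simp add: lang_match_mono)
next
  case (Suc j)
  have "lang_match sc (match_pow fl (Suc j)) = lang_match (lang_match sc (match_pow fl j)) fl"
    by (simp add: lang_match_assoc)
  also have "\<dots> \<subseteq> lang_match (match_pow B (Suc j)) B"
    using Suc.IH assms by (intro lang_match_mono) auto
  finally show ?case by simp
qed

theorem lemma1:
  fixes B sc fl :: "'a xletter list set"
  assumes "decomposed_form B sc fl"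
  shows "consensual B = (sc \<union> lang_match sc (match_star fl)) \<inter> plain_words"
proof -
  from assms have B: "B = sc \<union> fl" and fl: "unproductive fl" and sc: "unmatchable sc sc"
    unfolding decomposed_form_def by auto
  have fl_plain: "match_star fl \<inter> plain_words = {}"
    using fl unfolding unproductive_def consensual_def .
  have "B \<subseteq> sc \<union> match_star fl \<union> lang_match sc (match_star fl)"
    using B subset_match_star[of fl] by blast
  then have "match_star B \<subseteq> sc \<union> match_star fl \<union> lang_match sc (match_star fl)"
    using scaffold_fill_closed[OF B sc] by (rule match_star_least)
  moreover have "sc \<subseteq> match_star B"
    using B subset_match_star by blast
  moreover have "lang_match sc (match_star fl) \<subseteq> match_star B"
    unfolding match_star_def[of fl] lang_match_UN_right
    using scaffold_match_pow_subset[OF B] match_pow_subset_match_star by blast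
  ultimately show ?thesis
    using fl_plain unfolding consensual_def by blast
qed

end
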